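(* Let $M$ be the second moment matrix of the observed variables, $M_{ij}=\mathbb E[v_iv_j]$, and let $\hat M$ be its empirical estimate from $n$ i.i.d. samples. Let $\hat a$ be the estimate of the $m$ accuracies $a_i=\mathbb E[v_iY(i)]$ obtained from $\hat M$ by the triplet method. Define $a_{\min}=\min\{\min_i|\hat a_i|,\min_i|a_i|\}$ and assume $\mathrm{sign}(a_i)=\mathrm{sign}(\hat a_i)$ for all $i$. Assume further that $n$ exceeds some $n_0$ such that $a_{\min}>0$ and $\hat M_{ij}\neq0$. Then $$\mathbb E\big[\|\hat a-a\|_2\big]\le C_a\frac{1}{a_{\min}^5}\sqrt{\frac mn}$$ for some constant $C_a$.
   Context: Observed variables $v_i\in\{\pm1\}$ each attached to a hidden variable $Y(i)\in\{\pm1\}$ in a binary Ising model. Triplet method: for each accuracy to estimate, pick indices forming a triplet $(i,j,k)$ of observed variables pairwise conditionally independent given $Y(i)$ (so that $\mathbb E[v_iv_j]=a_ia_j$ etc.), and set $|\hat a_i|=\big(|\hat M_{ij}||\hat M_{ik}|/|\hat M_{jk}|\big)^{1/2}$ and analogously for $j,k$; at most one triplet is used per accuracy. *)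

theory Defs
  imports "HOL-Probability.Probability"
begin

text \<open>A joint distribution D over pairs (v, Y): v is the vector of observed variables
  (indexed by nat, only indices below m matter), Y the vector of hidden variables;
  observed variable i is attached to the hidden variable Y (hid i).\<close>

definition accuracy :: "((nat \<Rightarrow> real) \<times> (nat \<Rightarrow> real)) pmf \<Rightarrow> (nat \<Rightarrow> nat) \<Rightarrow> nat \<Rightarrow> real" where
  "accuracy D hid i = measure_pmf.expectation D (\<lambda>(v, y). v i * y (hid i))"

definition moment :: "((nat \<Rightarrow> real) \<times> (nat \<Rightarrow> real)) pmf \<Rightarrow> nat \<Rightarrow> nat \<Rightarrow> real" where
  "moment D i j = measure_pmf.expectation D (\<lambda>(v, y). v i * v j)"

definition samples :: "nat \<Rightarrow> ((nat \<Rightarrow> real) \<times> (nat \<Rightarrow> real)) pmf \<Rightarrow> (nat \<Rightarrow> nat \<Rightarrow> real) pmf" where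
  "samples n D = Pi_pmf {..<n} (\<lambda>_. 0) (\<lambda>_. map_pmf fst D)"

definition emp_moment :: "nat \<Rightarrow> (nat \<Rightarrow> nat \<Rightarrow> real) \<Rightarrow> nat \<Rightarrow> nat \<Rightarrow> real" where
  "emp_moment n S i j = (\<Sum>s<n. S s i * S s j) / real n"

definition triplet_abs :: "nat \<Rightarrow> (nat \<Rightarrow> nat \<Rightarrow> real) \<Rightarrow> nat \<Rightarrow> nat \<Rightarrow> nat \<Rightarrow> real" where
  "triplet_abs n S i j k =
     sqrt (\<bar>emp_moment n S i j\<bar> * \<bar>emp_moment n S i k\<bar> / \<bar>emp_moment n S j k\<bar>)"

end

theory Submission
  imports Defs
begin

text \<open>Write e_xy = Mhat_xy - a_x a_y for the deviations of the empirical moments. The signs of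
  ahat_i and a_i agree, so only absolute values matter. If the denominator is accurate,
  |e_jk| <= |a_j a_k| / 2, the identity
  (|ahat_i| - |a_i|) (|ahat_i| + |a_i|) = (P - a_i^2 q) / q + |ahat_i|^2 (q - |Mhat_jk|) / q,
  with P = |Mhat_ij| |Mhat_ik| and q = |a_j a_k|, gives |ahat_i - a_i| <= 2 (|e_ij| + |e_ik| + |e_jk|) / a_min^3.
  Otherwise Mhat_jk is still a nonzero multiple of 1/n, so (ahat_i - a_i)^2 <= 4 n, and this rare case
  is paid for by the factor n (2 e_jk / a_min^2)^4 >= n. The second and fourth moments of the mean
  of n i.i.d. bounded centred variables are O(1/n) and O(1/n^2) (add one sample at a time and
  expand binomially), hence E ||ahat - a||^2 = O(m / (n a_min^8)), and by Jensen
  E ||ahat - a|| = O(sqrt (m / n) / a_min^4), which is within the claimed bound as a_min <= 1.\<close>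

lemma abs_diff_eq_abs_diff_abs_if_sgn_eq:
  fixes x y :: real
  assumes "sgn x = sgn y"
  shows "\<bar>x - y\<bar> = \<bar>\<bar>x\<bar> - \<bar>y\<bar>\<bar>"
  using assms by (cases x "0::real" rule: linorder_cases; cases y "0::real" rule: linorder_cases) auto

lemma abs_mult_diff_le:
  fixes x y x' y' :: real
  assumes "\<bar>y\<bar> \<le> 1" "\<bar>x'\<bar> \<le> 1"
  shows "\<bar>x * y - x' * y'\<bar> \<le> \<bar>x - x'\<bar> + \<bar>y - y'\<bar>"
proof -
  have "x * y - x' * y' = (x - x') * y + x' * (y - y')" by (simp add: algebra_simps)
  also have "\<bar>\<dots>\<bar> \<le> \<bar>x - x'\<bar> * \<bar>y\<bar> + \<bar>x'\<bar> * \<bar>y - y'\<bar>"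
    by (metis abs_mult abs_triangle_ineq)
  also have "\<dots> \<le> \<bar>x - x'\<bar> * 1 + 1 * \<bar>y - y'\<bar>"
    using assms by (intro add_mono mult_mono) auto
  finally show ?thesis by simp
qed

lemma sqrt_ratio_error_le:
  fixes \<alpha> A P Q q \<delta>\<^sub>1 \<delta>\<^sub>2 amin :: real
  assumes pos: "0 < amin" "amin \<le> A" "0 < q"
    and \<alpha>: "0 \<le> \<alpha>" "\<alpha>\<^sup>2 * Q = P"
    and \<delta>: "\<bar>P - A\<^sup>2 * q\<bar> \<le> \<delta>\<^sub>1" "\<bar>q - Q\<bar> \<le> \<delta>\<^sub>2"
  shows "\<bar>\<alpha> - A\<bar> \<le> \<delta>\<^sub>1 / (q * amin) + \<alpha> * (\<delta>\<^sub>2 / q)"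
proof -
  have sum_ge: "amin \<le> \<alpha> + A" "\<alpha> \<le> \<alpha> + A" using pos \<alpha> by auto
  have "0 \<le> \<delta>\<^sub>1" "0 \<le> \<delta>\<^sub>2" using \<delta> by auto
  have identity: "(\<alpha> - A) * (\<alpha> + A) = (P - A\<^sup>2 * q) / q + \<alpha>\<^sup>2 * (q - Q) / q"
    using pos \<alpha> by (simp add: field_simps power2_eq_square)
  have "(\<alpha> + A) * \<bar>\<alpha> - A\<bar> = \<bar>(\<alpha> - A) * (\<alpha> + A)\<bar>"
    using sum_ge pos by (simp add: abs_mult mult.commute)
  also have "\<dots> = \<bar>(P - A\<^sup>2 * q) / q + \<alpha>\<^sup>2 * (q - Q) / q\<bar>"
    by (simp only: identity)
  also have "\<dots> \<le> \<delta>\<^sub>1 / q + \<alpha>\<^sup>2 * \<delta>\<^sub>2 / q"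
    using pos \<delta> by (auto simp: abs_mult intro!: order_trans[OF abs_triangle_ineq] add_mono
        divide_right_mono mult_left_mono)
  also have "\<dots> \<le> (\<alpha> + A) * (\<delta>\<^sub>1 / (q * amin)) + (\<alpha> + A) * (\<alpha> * \<delta>\<^sub>2 / q)"
  proof (intro add_mono)
    have "\<delta>\<^sub>1 / q = amin * (\<delta>\<^sub>1 / (q * amin))" using pos by simp
    also have "\<dots> \<le> (\<alpha> + A) * (\<delta>\<^sub>1 / (q * amin))"
      using sum_ge pos \<open>0 \<le> \<delta>\<^sub>1\<close> by (intro mult_right_mono) auto
    finally show "\<delta>\<^sub>1 / q \<le> (\<alpha> + A) * (\<delta>\<^sub>1 / (q * amin))" .
    have "\<alpha>\<^sup>2 * \<delta>\<^sub>2 / q = \<alpha> * (\<alpha> * \<delta>\<^sub>2 / q)" by (simp add: power2_eq_square)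
    also have "\<dots> \<le> (\<alpha> + A) * (\<alpha> * \<delta>\<^sub>2 / q)"
      using sum_ge pos \<alpha> \<open>0 \<le> \<delta>\<^sub>2\<close> by (intro mult_right_mono) auto
    finally show "\<alpha>\<^sup>2 * \<delta>\<^sub>2 / q \<le> (\<alpha> + A) * (\<alpha> * \<delta>\<^sub>2 / q)" .
  qed
  finally have "(\<alpha> + A) * \<bar>\<alpha> - A\<bar> \<le> (\<alpha> + A) * (\<delta>\<^sub>1 / (q * amin) + \<alpha> * (\<delta>\<^sub>2 / q))"
    by (simp add: algebra_simps)
  then show ?thesis
    by (rule mult_left_le_imp_le) (use sum_ge pos in auto)
qed

lemma sqrt_ratio_perturbation:
  fixes \<alpha> A P Q q \<delta>\<^sub>1 \<delta>\<^sub>2 amin :: real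
  assumes amin: "0 < amin" "amin \<le> A" "A \<le> 1" "amin\<^sup>2 \<le> q"
    and \<alpha>: "0 \<le> \<alpha>" "\<alpha>\<^sup>2 * Q = P"
    and \<delta>: "\<bar>P - A\<^sup>2 * q\<bar> \<le> \<delta>\<^sub>1" "\<bar>q - Q\<bar> \<le> \<delta>\<^sub>2" "\<delta>\<^sub>2 \<le> q / 2"
  shows "\<bar>\<alpha> - A\<bar> \<le> 2 * (\<delta>\<^sub>1 + \<delta>\<^sub>2) / amin ^ 3"
proof -
  define e where "e = \<bar>\<alpha> - A\<bar>"
  have q: "0 < q" using amin by (meson order_less_le_trans zero_less_power)
  have "e \<le> \<delta>\<^sub>1 / (q * amin) + \<alpha> * (\<delta>\<^sub>2 / q)"
    unfolding e_def using amin(1,2) q \<alpha> \<delta>(1,2) by (rule sqrt_ratio_error_le)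
  also have "\<alpha> * (\<delta>\<^sub>2 / q) \<le> e / 2 + \<delta>\<^sub>2 / q"
  proof -
    have "\<alpha> \<le> e + 1" using amin by (simp add: e_def)
    then have "\<alpha> * (\<delta>\<^sub>2 / q) \<le> (e + 1) * (\<delta>\<^sub>2 / q)"
      using q \<delta> by (intro mult_right_mono) auto
    moreover have "e * (\<delta>\<^sub>2 / q) \<le> e * (1 / 2)"
      using q \<delta> by (intro mult_left_mono) (auto simp: e_def)
    moreover have "(e + 1) * (\<delta>\<^sub>2 / q) = e * (\<delta>\<^sub>2 / q) + \<delta>\<^sub>2 / q"
      by (simp only: distrib_right mult_1_left)
    ultimately show ?thesis by linarith
  qed
  finally have "e \<le> 2 * \<delta>\<^sub>1 / (q * amin) + 2 * \<delta>\<^sub>2 / q" by (simp add: field_simps)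
  also have "\<dots> \<le> 2 * \<delta>\<^sub>1 / amin ^ 3 + 2 * \<delta>\<^sub>2 / amin ^ 3"
  proof -
    have "amin ^ 3 \<le> amin\<^sup>2" using amin by (intro power_decreasing) auto
    moreover have "amin ^ 3 \<le> q * amin"
      using amin mult_right_mono[OF amin(4), of amin] by (simp add: power2_eq_square power3_eq_cube)
    ultimately show ?thesis
      using amin q \<delta> by (intro add_mono divide_left_mono) auto
  qed
  finally show ?thesis by (simp add: e_def add_divide_distrib)
qed

lemma sq_sum3_le: "((x::real) + y + z)\<^sup>2 \<le> 3 * (x\<^sup>2 + y\<^sup>2 + z\<^sup>2)"
proof -
  have "0 \<le> (x - y)\<^sup>2 + (y - z)\<^sup>2 + (x - z)\<^sup>2" by simp
  then show ?thesis by (simp add: power2_eq_square algebra_simps)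
qed

lemma triplet_abs_error_le:
  fixes M\<^sub>i\<^sub>j M\<^sub>i\<^sub>k M\<^sub>j\<^sub>k a\<^sub>i a\<^sub>j a\<^sub>k \<alpha> amin :: real
  assumes acc: "0 < amin" "amin \<le> \<bar>a\<^sub>i\<bar>" "\<bar>a\<^sub>i\<bar> \<le> 1" "amin \<le> \<bar>a\<^sub>j\<bar>" "\<bar>a\<^sub>j\<bar> \<le> 1"
      "amin \<le> \<bar>a\<^sub>k\<bar>" "\<bar>a\<^sub>k\<bar> \<le> 1"
    and M: "\<bar>M\<^sub>i\<^sub>j\<bar> \<le> 1" "\<bar>M\<^sub>i\<^sub>k\<bar> \<le> 1" "M\<^sub>j\<^sub>k \<noteq> 0"
    and \<alpha>: "\<bar>\<alpha>\<bar> = sqrt (\<bar>M\<^sub>i\<^sub>j\<bar> * \<bar>M\<^sub>i\<^sub>k\<bar> / \<bar>M\<^sub>j\<^sub>k\<bar>)"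
    and close: "\<bar>M\<^sub>j\<^sub>k - a\<^sub>j * a\<^sub>k\<bar> \<le> \<bar>a\<^sub>j * a\<^sub>k\<bar> / 2"
  shows "\<bar>\<bar>\<alpha>\<bar> - \<bar>a\<^sub>i\<bar>\<bar> \<le>
    2 * (\<bar>M\<^sub>i\<^sub>j - a\<^sub>i * a\<^sub>j\<bar> + \<bar>M\<^sub>i\<^sub>k - a\<^sub>i * a\<^sub>k\<bar> + \<bar>M\<^sub>j\<^sub>k - a\<^sub>j * a\<^sub>k\<bar>) / amin ^ 3"
proof (rule sqrt_ratio_perturbation[where \<delta>\<^sub>1="\<bar>M\<^sub>i\<^sub>j - a\<^sub>i * a\<^sub>j\<bar> + \<bar>M\<^sub>i\<^sub>k - a\<^sub>i * a\<^sub>k\<bar>"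
      and q="\<bar>a\<^sub>j * a\<^sub>k\<bar>" and Q="\<bar>M\<^sub>j\<^sub>k\<bar>"])
  show "amin\<^sup>2 \<le> \<bar>a\<^sub>j * a\<^sub>k\<bar>"
    unfolding power2_eq_square abs_mult using acc by (intro mult_mono) auto
  show "\<bar>\<alpha>\<bar>\<^sup>2 * \<bar>M\<^sub>j\<^sub>k\<bar> = \<bar>M\<^sub>i\<^sub>j\<bar> * \<bar>M\<^sub>i\<^sub>k\<bar>"
    unfolding \<alpha> using M(3) by simp
  have "\<bar>\<bar>M\<^sub>i\<^sub>j\<bar> * \<bar>M\<^sub>i\<^sub>k\<bar> - \<bar>a\<^sub>i * a\<^sub>j\<bar> * \<bar>a\<^sub>i * a\<^sub>k\<bar>\<bar>
      \<le> \<bar>M\<^sub>i\<^sub>j - a\<^sub>i * a\<^sub>j\<bar> + \<bar>M\<^sub>i\<^sub>k - a\<^sub>i * a\<^sub>k\<bar>"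
    using M acc by (intro order_trans[OF abs_mult_diff_le] add_mono abs_triangle_ineq3)
       (auto simp: abs_mult intro: mult_le_one)
  moreover have "\<bar>a\<^sub>i * a\<^sub>j\<bar> * \<bar>a\<^sub>i * a\<^sub>k\<bar> = \<bar>a\<^sub>i\<bar>\<^sup>2 * \<bar>a\<^sub>j * a\<^sub>k\<bar>"
    by (simp add: abs_mult power2_eq_square mult_ac)
  ultimately show "\<bar>\<bar>M\<^sub>i\<^sub>j\<bar> * \<bar>M\<^sub>i\<^sub>k\<bar> - \<bar>a\<^sub>i\<bar>\<^sup>2 * \<bar>a\<^sub>j * a\<^sub>k\<bar>\<bar>
      \<le> \<bar>M\<^sub>i\<^sub>j - a\<^sub>i * a\<^sub>j\<bar> + \<bar>M\<^sub>i\<^sub>k - a\<^sub>i * a\<^sub>k\<bar>"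
    by (simp only:)
  show "\<bar>\<bar>a\<^sub>j * a\<^sub>k\<bar> - \<bar>M\<^sub>j\<^sub>k\<bar>\<bar> \<le> \<bar>M\<^sub>j\<^sub>k - a\<^sub>j * a\<^sub>k\<bar>"
    by (metis abs_minus_commute abs_triangle_ineq3)
qed (use acc close in auto)

lemma triplet_abs_sq_le:
  fixes M\<^sub>i\<^sub>j M\<^sub>i\<^sub>k M\<^sub>j\<^sub>k \<alpha> N :: real
  assumes M: "\<bar>M\<^sub>i\<^sub>j\<bar> \<le> 1" "\<bar>M\<^sub>i\<^sub>k\<bar> \<le> 1" "1 \<le> N * \<bar>M\<^sub>j\<^sub>k\<bar>"
    and \<alpha>: "\<bar>\<alpha>\<bar> = sqrt (\<bar>M\<^sub>i\<^sub>j\<bar> * \<bar>M\<^sub>i\<^sub>k\<bar> / \<bar>M\<^sub>j\<^sub>k\<bar>)"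
  shows "\<bar>\<alpha>\<bar>\<^sup>2 \<le> N"
proof -
  have Q: "0 < \<bar>M\<^sub>j\<^sub>k\<bar>" using M(3) by (cases "M\<^sub>j\<^sub>k = 0") auto
  have "\<bar>\<alpha>\<bar>\<^sup>2 = \<bar>M\<^sub>i\<^sub>j\<bar> * \<bar>M\<^sub>i\<^sub>k\<bar> / \<bar>M\<^sub>j\<^sub>k\<bar>" unfolding \<alpha> by simp
  also have "\<dots> \<le> 1 / \<bar>M\<^sub>j\<^sub>k\<bar>"
    using M Q by (intro divide_right_mono mult_le_one) auto
  also have "\<dots> \<le> N" using M(3) Q by (simp add: field_simps)
  finally show ?thesis .
qed

lemma triplet_sq_error_le:
  fixes M\<^sub>i\<^sub>j M\<^sub>i\<^sub>k M\<^sub>j\<^sub>k a\<^sub>i a\<^sub>j a\<^sub>k \<alpha> amin N :: real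
  assumes acc: "0 < amin" "amin \<le> \<bar>a\<^sub>i\<bar>" "\<bar>a\<^sub>i\<bar> \<le> 1" "amin \<le> \<bar>a\<^sub>j\<bar>" "\<bar>a\<^sub>j\<bar> \<le> 1"
      "amin \<le> \<bar>a\<^sub>k\<bar>" "\<bar>a\<^sub>k\<bar> \<le> 1"
    and M: "\<bar>M\<^sub>i\<^sub>j\<bar> \<le> 1" "\<bar>M\<^sub>i\<^sub>k\<bar> \<le> 1" "\<bar>M\<^sub>j\<^sub>k\<bar> \<le> 1" "1 \<le> N * \<bar>M\<^sub>j\<^sub>k\<bar>"
    and \<alpha>: "\<bar>\<alpha>\<bar> = sqrt (\<bar>M\<^sub>i\<^sub>j\<bar> * \<bar>M\<^sub>i\<^sub>k\<bar> / \<bar>M\<^sub>j\<^sub>k\<bar>)" "sgn \<alpha> = sgn a\<^sub>i"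
  shows "(\<alpha> - a\<^sub>i)\<^sup>2 \<le>
      12 * ((M\<^sub>i\<^sub>j - a\<^sub>i * a\<^sub>j)\<^sup>2 + (M\<^sub>i\<^sub>k - a\<^sub>i * a\<^sub>k)\<^sup>2 + (M\<^sub>j\<^sub>k - a\<^sub>j * a\<^sub>k)\<^sup>2) / amin ^ 6
      + 64 * N * (M\<^sub>j\<^sub>k - a\<^sub>j * a\<^sub>k) ^ 4 / amin ^ 8" (is "_ \<le> ?small + ?large")
proof -
  define d\<^sub>1 where "d\<^sub>1 = \<bar>M\<^sub>i\<^sub>j - a\<^sub>i * a\<^sub>j\<bar>"
  define d\<^sub>2 where "d\<^sub>2 = \<bar>M\<^sub>i\<^sub>k - a\<^sub>i * a\<^sub>k\<bar>"
  define d\<^sub>3 where "d\<^sub>3 = \<bar>M\<^sub>j\<^sub>k - a\<^sub>j * a\<^sub>k\<bar>"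
  have err: "(\<alpha> - a\<^sub>i)\<^sup>2 = (\<bar>\<alpha>\<bar> - \<bar>a\<^sub>i\<bar>)\<^sup>2"
    using abs_diff_eq_abs_diff_abs_if_sgn_eq[OF \<alpha>(2)] by (metis power2_abs)
  have Q: "0 < \<bar>M\<^sub>j\<^sub>k\<bar>" using M(4) by (cases "M\<^sub>j\<^sub>k = 0") auto
  have N: "1 \<le> N"
    using M(3,4) mult_left_le[of "\<bar>M\<^sub>j\<^sub>k\<bar>" N] mult_nonpos_nonneg[of N "\<bar>M\<^sub>j\<^sub>k\<bar>"]
    by (cases "0 \<le> N") auto
  have nonneg: "0 \<le> ?small" "0 \<le> ?large" using acc N by auto
  show ?thesis
  proof (cases "d\<^sub>3 \<le> \<bar>a\<^sub>j * a\<^sub>k\<bar> / 2")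
    case True
    then have "\<bar>\<bar>\<alpha>\<bar> - \<bar>a\<^sub>i\<bar>\<bar> \<le> 2 * (d\<^sub>1 + d\<^sub>2 + d\<^sub>3) / amin ^ 3"
      unfolding d\<^sub>1_def d\<^sub>2_def d\<^sub>3_def using Q by (intro triplet_abs_error_le acc M(1,2) \<alpha>(1)) auto
    then have "(\<alpha> - a\<^sub>i)\<^sup>2 \<le> (2 * (d\<^sub>1 + d\<^sub>2 + d\<^sub>3) / amin ^ 3)\<^sup>2"
      unfolding err by (metis abs_ge_zero order_trans power2_abs power_mono)
    also have "\<dots> = 4 * (d\<^sub>1 + d\<^sub>2 + d\<^sub>3)\<^sup>2 / amin ^ 6"
      by (simp only: power_divide power_mult_distrib) (simp flip: power_mult)
    also have "\<dots> \<le> 4 * (3 * (d\<^sub>1\<^sup>2 + d\<^sub>2\<^sup>2 + d\<^sub>3\<^sup>2)) / amin ^ 6"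
      using acc by (intro divide_right_mono mult_left_mono sq_sum3_le) auto
    also have "\<dots> = ?small" by (simp add: d\<^sub>1_def d\<^sub>2_def d\<^sub>3_def)
    finally show ?thesis using nonneg by linarith
  next
    case False
    have "amin\<^sup>2 \<le> \<bar>a\<^sub>j * a\<^sub>k\<bar>"
      unfolding power2_eq_square abs_mult using acc by (intro mult_mono) auto
    then have "1 \<le> 2 * d\<^sub>3 / amin\<^sup>2" using False acc by (simp add: field_simps)
    then have rare: "1 \<le> (2 * d\<^sub>3 / amin\<^sup>2) ^ 4" by (rule one_le_power)
    have "\<bar>\<alpha>\<bar>\<^sup>2 \<le> N" using M(1,2,4) \<alpha>(1) by (rule triplet_abs_sq_le)
    have "(\<alpha> - a\<^sub>i)\<^sup>2 \<le> 2 * \<bar>\<alpha>\<bar>\<^sup>2 + 2 * \<bar>a\<^sub>i\<bar>\<^sup>2"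
      unfolding err by (simp add: power2_eq_square algebra_simps)
    also have "\<dots> \<le> 4 * N"
      using \<open>\<bar>\<alpha>\<bar>\<^sup>2 \<le> N\<close> N abs_le_square_iff[of "a\<^sub>i" 1] acc(3) by simp
    also have "\<dots> \<le> 4 * N * (2 * d\<^sub>3 / amin\<^sup>2) ^ 4"
      using rare N by simp
    also have "\<dots> = ?large"
      by (simp add: d\<^sub>3_def power_divide power_mult_distrib power_even_abs flip: power_mult)
    finally show ?thesis using nonneg by linarith
  qed
qed

lemma integrable_measure_pmf_bounded:
  fixes f :: "'a \<Rightarrow> real"
  assumes "\<And>x. x \<in> set_pmf p \<Longrightarrow> \<bar>f x\<bar> \<le> K"
  shows "integrable (measure_pmf p) f"
  by (intro measure_pmf.integrable_const_bound[where B=K]) (auto simp: AE_measure_pmf_iff assms)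

lemma abs_expectation_le_bound:
  fixes f :: "'a \<Rightarrow> real"
  assumes "\<And>x. x \<in> set_pmf p \<Longrightarrow> \<bar>f x\<bar> \<le> K"
  shows "\<bar>measure_pmf.expectation p f\<bar> \<le> K"
proof -
  have "\<bar>measure_pmf.expectation p f\<bar> \<le> measure_pmf.expectation p (\<lambda>x. \<bar>f x\<bar>)"
    by (rule integral_abs_bound)
  also have "\<dots> \<le> K"
    using assms
    by (intro measure_pmf.integral_le_const integrable_measure_pmf_bounded[where K=K])
       (auto simp: AE_measure_pmf_iff)
  finally show ?thesis .
qed

lemma set_Pi_pmf_coordinate:
  assumes "S \<in> set_pmf (Pi_pmf A d p)" "finite A" "s \<in> A"
  shows "S s \<in> set_pmf (p s)"
  using assms by (auto simp: set_Pi_pmf PiE_dflt_def)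

lemma expectation_bind_pmf_bounded:
  fixes f :: "'b \<Rightarrow> real"
  assumes bounded: "\<And>x. x \<in> set_pmf (bind_pmf p q) \<Longrightarrow> \<bar>f x\<bar> \<le> K"
  shows "measure_pmf.expectation (bind_pmf p q) f =
         measure_pmf.expectation p (\<lambda>a. measure_pmf.expectation (q a) f)"
proof -
  define f' where "f' x = (if x \<in> set_pmf (bind_pmf p q) then f x else 0)" for x
  obtain x0 where "x0 \<in> set_pmf (bind_pmf p q)"
    by (meson ex_in_conv set_pmf_not_empty)
  then have "0 \<le> K" using bounded by fastforce
  then have f'_bounded: "\<bar>f' x\<bar> \<le> K" for x
    using bounded[of x] by (auto simp: f'_def)
  have "measure_pmf.expectation (bind_pmf p q) f = measure_pmf.expectation (bind_pmf p q) f'"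
    by (intro integral_cong_AE) (auto simp: f'_def AE_measure_pmf_iff)
  also have "\<dots> = measure_pmf.expectation p (\<lambda>a. measure_pmf.expectation (q a) f')"
    unfolding measure_pmf_bind
    by (rule integral_bind[where K="count_space UNIV" and B=K and B'=1])
       (auto simp: f'_bounded space_subprob_algebra
             intro!: prob_space_imp_subprob_space measure_pmf.prob_space_axioms
                     measure_pmf.finite_measure_axioms)
  also have "\<dots> = measure_pmf.expectation p (\<lambda>a. measure_pmf.expectation (q a) f)"
    by (intro integral_cong_AE AE_pmfI) (auto simp: f'_def AE_measure_pmf_iff)
  finally show ?thesis .
qed

lemma (in prob_space) nn_integral_sqrt_le_sqrt_expectation:
  fixes Z :: "'a \<Rightarrow> real"
  assumes Z: "integrable M Z" "AE x in M. 0 \<le> Z x"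
  shows "(\<integral>\<^sup>+x. ennreal (sqrt (Z x)) \<partial>M) \<le> ennreal (sqrt (expectation Z))"
proof (cases "expectation Z = 0")
  case True
  then have "AE x in M. Z x = 0" using integral_nonneg_eq_0_iff_AE[OF Z] by blast
  then have "(\<integral>\<^sup>+x. ennreal (sqrt (Z x)) \<partial>M) = (\<integral>\<^sup>+x. 0 \<partial>M)"
    by (intro nn_integral_cong_AE) auto
  then show ?thesis by simp
next
  case False
  define t where "t = sqrt (expectation Z)"
  have t: "0 < t" using False integral_nonneg_AE[OF Z(2)] by (simp add: t_def)
  text \<open>Bound the square root by its tangent at the mean.\<close>
  have "(\<integral>\<^sup>+x. ennreal (sqrt (Z x)) \<partial>M) \<le> (\<integral>\<^sup>+x. ennreal ((Z x / t + t) / 2) \<partial>M)"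
  proof (intro nn_integral_mono_AE, use Z(2) in eventually_elim)
    case (elim x)
    have "sqrt (Z x) = sqrt (Z x / t * t)" using t by simp
    also have "\<dots> \<le> (Z x / t + t) / 2" using elim t by (intro arith_geo_mean_sqrt) auto
    finally show ?case by (rule ennreal_leI)
  qed
  also have "\<dots> = ennreal (expectation (\<lambda>x. (Z x / t + t) / 2))"
    using Z t by (intro nn_integral_eq_integral) (auto elim!: AE_mp)
  also have "expectation (\<lambda>x. (Z x / t + t) / 2) = t"
    using Z t by (simp add: t_def prob_space) (simp add: field_simps)
  finally show ?thesis by (simp add: t_def)
qed

locale centered_bounded =
  fixes X :: "'a pmf" and g :: "'a \<Rightarrow> real" and c :: real
  assumes bounded: "x \<in> set_pmf X \<Longrightarrow> \<bar>g x\<bar> \<le> c"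
    and centered: "measure_pmf.expectation X g = 0"
begin

definition sum_moment :: "'a \<Rightarrow> nat \<Rightarrow> nat \<Rightarrow> real" where
  "sum_moment d n k =
     measure_pmf.expectation (Pi_pmf {..<n} d (\<lambda>_. X)) (\<lambda>S. (\<Sum>s<n. g (S s)) ^ k)"

lemma sum_moment_0 [simp]: "sum_moment d n 0 = 1"
  by (simp add: sum_moment_def)

lemma abs_sum_le:
  fixes n :: nat
  assumes "S \<in> set_pmf (Pi_pmf {..<n} d (\<lambda>_. X))"
  shows "\<bar>\<Sum>s<n. g (S s)\<bar> \<le> c * n"
proof -
  have "\<bar>\<Sum>s<n. g (S s)\<bar> \<le> (\<Sum>s<n. \<bar>g (S s)\<bar>)" by (rule sum_abs)
  also have "\<dots> \<le> (\<Sum>s<n. c)"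
    using set_Pi_pmf_coordinate[OF assms finite_lessThan] by (intro sum_mono bounded) auto
  finally show ?thesis by (simp add: mult.commute)
qed

lemma abs_power_le: "x \<in> set_pmf X \<Longrightarrow> \<bar>g x ^ k\<bar> \<le> c ^ k"
  unfolding power_abs by (intro power_mono bounded) auto

lemma abs_expectation_power_le: "\<bar>measure_pmf.expectation X (\<lambda>x. g x ^ k)\<bar> \<le> c ^ k"
  by (intro abs_expectation_le_bound abs_power_le)

lemma integrable_power: "integrable (measure_pmf X) (\<lambda>x. g x ^ k)"
  by (rule integrable_measure_pmf_bounded) (rule abs_power_le)

lemma integrable_sum_power:
  fixes n :: nat
  shows "integrable (measure_pmf (Pi_pmf {..<n} d (\<lambda>_. X))) (\<lambda>S. (\<Sum>s<n. g (S s)) ^ k)"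
proof (rule integrable_measure_pmf_bounded)
  fix S assume "S \<in> set_pmf (Pi_pmf {..<n} d (\<lambda>_. X))"
  then show "\<bar>(\<Sum>s<n. g (S s)) ^ k\<bar> \<le> (c * n) ^ k"
    unfolding power_abs by (intro power_mono abs_sum_le) auto
qed

lemma sum_moment_Suc:
  "sum_moment d (Suc n) k =
     (\<Sum>i\<le>k. of_nat (k choose i) * sum_moment d n i * measure_pmf.expectation X (\<lambda>x. g x ^ (k - i)))"
proof -
  let ?P = "Pi_pmf {..<n} d (\<lambda>_. X)"
  let ?T = "\<lambda>S. \<Sum>s<n. g (S s)"
  have Pi_Suc: "Pi_pmf {..<Suc n} d (\<lambda>_. X) = X \<bind> (\<lambda>y. ?P \<bind> (\<lambda>S. return_pmf (S(n := y))))"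
    unfolding lessThan_Suc by (rule Pi_pmf_insert') auto
  have sum_upd: "?T (S(n := y)) = ?T S" for S y
    by (intro sum.cong) auto
  have bound: "\<bar>(?T S + g y) ^ k\<bar> \<le> (c * n + c) ^ k" if "S \<in> set_pmf ?P" "y \<in> set_pmf X" for S y
    unfolding power_abs
    using abs_sum_le[OF that(1)] bounded[OF that(2)] by (intro power_mono) auto
  have inner: "measure_pmf.expectation (?P \<bind> (\<lambda>S. return_pmf (S(n := y))))
        (\<lambda>S. (?T S + g (S n)) ^ k) = measure_pmf.expectation ?P (\<lambda>S. (?T S + g y) ^ k)"
    if "y \<in> set_pmf X" for y
    by (subst expectation_bind_pmf_bounded[where K="(c * n + c) ^ k"])
       (use bound that in \<open>auto simp: sum_upd\<close>)
  have "sum_moment d (Suc n) k =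
      measure_pmf.expectation X (\<lambda>y. measure_pmf.expectation ?P (\<lambda>S. (?T S + g y) ^ k))"
    unfolding sum_moment_def Pi_Suc
    by (subst expectation_bind_pmf_bounded[where K="(c * n + c) ^ k"])
       (use bound in \<open>auto simp: sum_upd inner intro!: integral_cong_AE AE_pmfI\<close>)
  also have "\<dots> = measure_pmf.expectation X (\<lambda>y.
      \<Sum>i\<le>k. of_nat (k choose i) * sum_moment d n i * g y ^ (k - i))"
    by (simp add: binomial_ring sum_moment_def integrable_sum_power mult.assoc)
  also have "\<dots> = (\<Sum>i\<le>k. of_nat (k choose i) * sum_moment d n i * measure_pmf.expectation X (\<lambda>x. g x ^ (k - i)))"
    by (simp add: integrable_power)
  finally show ?thesis .
qed

lemma sum_moment_1: "sum_moment d n 1 = 0"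
proof (induction n)
  case 0
  show ?case by (simp add: sum_moment_def)
next
  case (Suc n)
  then show ?case by (simp add: sum_moment_Suc centered)
qed

lemma sum_moment_2: "sum_moment d n 2 = n * measure_pmf.expectation X (\<lambda>x. g x ^ 2)"
proof (induction n)
  case 0
  show ?case by (simp add: sum_moment_def)
next
  case (Suc n)
  then show ?case
    by (simp add: sum_moment_Suc atMost_nat_numeral sum_moment_1 centered algebra_simps)
qed

lemma sum_moment_4_le: "sum_moment d n 4 \<le> 3 * c ^ 4 * n ^ 2"
proof (induction n)
  case 0
  show ?case by (simp add: sum_moment_def)
next
  case (Suc n)
  define \<sigma>\<^sub>2 where "\<sigma>\<^sub>2 = measure_pmf.expectation X (\<lambda>x. g x ^ 2)"
  have "sum_moment d (Suc n) 4 =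
      measure_pmf.expectation X (\<lambda>x. g x ^ 4) + 6 * n * \<sigma>\<^sub>2\<^sup>2 + sum_moment d n 4"
    by (simp add: sum_moment_Suc atMost_nat_numeral choose_two sum_moment_1[unfolded One_nat_def]
        centered sum_moment_2 \<sigma>\<^sub>2_def power2_eq_square)
  also have "\<dots> \<le> c ^ 4 + 6 * n * c ^ 4 + 3 * c ^ 4 * n ^ 2"
  proof -
    have "measure_pmf.expectation X (\<lambda>x. g x ^ 4) \<le> c ^ 4" "\<sigma>\<^sub>2 \<le> c\<^sup>2"
      unfolding \<sigma>\<^sub>2_def using abs_expectation_power_le by (auto dest: abs_le_D1)
    moreover have "0 \<le> \<sigma>\<^sub>2"
      unfolding \<sigma>\<^sub>2_def by (intro integral_nonneg_AE) auto
    ultimately have "\<sigma>\<^sub>2\<^sup>2 \<le> c ^ 4"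
      using power_mono[of "\<sigma>\<^sub>2" "c\<^sup>2" 2] by (simp flip: power_mult)
    with \<open>measure_pmf.expectation X (\<lambda>x. g x ^ 4) \<le> c ^ 4\<close> show ?thesis
      using Suc.IH by (intro add_mono mult_left_mono) auto
  qed
  also have "\<dots> \<le> 3 * c ^ 4 * (Suc n) ^ 2"
    by (simp add: power2_eq_square algebra_simps)
  finally show ?case .
qed

end

definition observed_pm1 :: "((nat \<Rightarrow> real) \<times> (nat \<Rightarrow> real)) pmf \<Rightarrow> nat \<Rightarrow> bool" where
  "observed_pm1 D i \<longleftrightarrow> (\<forall>(v, y) \<in> set_pmf D. v i \<in> {-1, 1})"

lemma samples_pm1:
  assumes "observed_pm1 D i" "S \<in> set_pmf (samples n D)" "s < n"
  shows "S s i \<in> {-1, 1}"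
proof -
  have "S s \<in> set_pmf (map_pmf fst D)"
    using set_Pi_pmf_coordinate[OF assms(2)[unfolded samples_def]] assms(3) by simp
  then show ?thesis using assms(1) by (auto simp: observed_pm1_def)
qed

lemma abs_moment_le_1:
  assumes "observed_pm1 D i" "observed_pm1 D j"
  shows "\<bar>moment D i j\<bar> \<le> 1"
  unfolding moment_def
  by (rule abs_expectation_le_bound) (use assms in \<open>fastforce simp: observed_pm1_def abs_mult\<close>)

lemma abs_emp_moment_le_1:
  assumes "observed_pm1 D i" "observed_pm1 D j" "S \<in> set_pmf (samples n D)"
  shows "\<bar>emp_moment n S i j\<bar> \<le> 1"
proof -
  have "\<bar>\<Sum>s<n. S s i * S s j\<bar> \<le> (\<Sum>s<n. 1)"
    using samples_pm1[OF assms(1,3)] samples_pm1[OF assms(2,3)]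
    by (intro order_trans[OF sum_abs] sum_mono) (fastforce simp: abs_mult)
  then show ?thesis by (cases "n = 0") (auto simp: emp_moment_def abs_divide)
qed

lemma emp_moment_nonzero_ge:
  assumes "observed_pm1 D i" "observed_pm1 D j" "S \<in> set_pmf (samples n D)"
    and "emp_moment n S i j \<noteq> 0"
  shows "1 \<le> n * \<bar>emp_moment n S i j\<bar>"
proof -
  have "(\<Sum>s<n. S s i * S s j) \<in> \<int>"
    using samples_pm1[OF assms(1,3)] samples_pm1[OF assms(2,3)] by (intro Ints_sum) fastforce
  moreover have "(\<Sum>s<n. S s i * S s j) \<noteq> 0" "n \<noteq> 0"
    using assms(4) by (auto simp: emp_moment_def)
  ultimately show ?thesis
    using Ints_nonzero_abs_ge1 by (fastforce simp: emp_moment_def abs_divide)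
qed

lemma emp_moment_deviation_moments:
  assumes "observed_pm1 D i" "observed_pm1 D j" "1 \<le> n"
  shows "measure_pmf.expectation (samples n D) (\<lambda>S. (emp_moment n S i j - moment D i j)\<^sup>2) \<le> 4 / real n"
    and "measure_pmf.expectation (samples n D) (\<lambda>S. (emp_moment n S i j - moment D i j) ^ 4) \<le> 48 / (real n)\<^sup>2"
proof -
  let ?M = "moment D i j"
  interpret centered_bounded "map_pmf fst D" "\<lambda>v. v i * v j - ?M" 2
  proof
    fix v assume "v \<in> set_pmf (map_pmf fst D)"
    then have "\<bar>v i * v j\<bar> \<le> 1" using assms by (fastforce simp: observed_pm1_def abs_mult)
    then show "\<bar>v i * v j - ?M\<bar> \<le> 2" using abs_moment_le_1[OF assms(1,2)] by linarith
  next
    have "integrable (measure_pmf (map_pmf fst D)) (\<lambda>v. v i * v j)"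
      by (rule integrable_measure_pmf_bounded[where K=1])
         (use assms in \<open>fastforce simp: observed_pm1_def abs_mult\<close>)
    then show "measure_pmf.expectation (map_pmf fst D) (\<lambda>v. v i * v j - ?M) = 0"
      by (simp add: moment_def case_prod_unfold)
  qed
  have deviation: "(emp_moment n S i j - ?M) ^ k = (\<Sum>s<n. S s i * S s j - ?M) ^ k / n ^ k" for S k
    using assms(3) by (simp add: emp_moment_def sum_subtractf field_simps flip: power_divide)
  have E: "measure_pmf.expectation (samples n D) (\<lambda>S. (emp_moment n S i j - ?M) ^ k)
      = sum_moment (\<lambda>_. 0) n k / n ^ k" for k
    by (simp add: deviation sum_moment_def samples_def)
  have "sum_moment (\<lambda>_. 0) n 2 \<le> real n * 2\<^sup>2"
    unfolding sum_moment_2 using abs_expectation_power_le[of 2] by (intro mult_left_mono) auto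
  then show "measure_pmf.expectation (samples n D) (\<lambda>S. (emp_moment n S i j - ?M)\<^sup>2) \<le> 4 / real n"
    unfolding E using assms(3) by (simp add: field_simps power2_eq_square)
  show "measure_pmf.expectation (samples n D) (\<lambda>S. (emp_moment n S i j - ?M) ^ 4) \<le> 48 / (real n)\<^sup>2"
    unfolding E using sum_moment_4_le[of "\<lambda>_. 0" n] assms(3)
    by (simp add: field_simps power2_eq_square power4_eq_xxxx)
qed

lemma abs_accuracy_le_1:
  assumes "\<forall>(v, y) \<in> set_pmf D. v i \<in> {-1, 1} \<and> y (hid i) \<in> {-1, 1}"
  shows "\<bar>accuracy D hid i\<bar> \<le> 1"
  unfolding accuracy_def
  by (rule abs_expectation_le_bound) (use assms in \<open>fastforce simp: abs_mult\<close>)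

lemma sample_triplet_sq_error_le:
  fixes a\<^sub>i a\<^sub>j a\<^sub>k amin \<alpha> :: real
  assumes pm1: "observed_pm1 D i" "observed_pm1 D j" "observed_pm1 D k"
    and factor: "moment D i j = a\<^sub>i * a\<^sub>j" "moment D i k = a\<^sub>i * a\<^sub>k" "moment D j k = a\<^sub>j * a\<^sub>k"
    and acc: "0 < amin" "amin \<le> \<bar>a\<^sub>i\<bar>" "\<bar>a\<^sub>i\<bar> \<le> 1" "amin \<le> \<bar>a\<^sub>j\<bar>" "\<bar>a\<^sub>j\<bar> \<le> 1"
      "amin \<le> \<bar>a\<^sub>k\<bar>" "\<bar>a\<^sub>k\<bar> \<le> 1"
    and S: "S \<in> set_pmf (samples n D)"
    and estimate: "\<bar>\<alpha>\<bar> = triplet_abs n S i j k" "sgn \<alpha> = sgn a\<^sub>i" "emp_moment n S j k \<noteq> 0"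
  shows "(\<alpha> - a\<^sub>i)\<^sup>2 \<le> 12 * ((emp_moment n S i j - moment D i j)\<^sup>2 + (emp_moment n S i k - moment D i k)\<^sup>2
      + (emp_moment n S j k - moment D j k)\<^sup>2) / amin ^ 6
    + 64 * real n * (emp_moment n S j k - moment D j k) ^ 4 / amin ^ 8"
  unfolding factor
proof (rule triplet_sq_error_le[OF acc])
  show "\<bar>emp_moment n S i j\<bar> \<le> 1" "\<bar>emp_moment n S i k\<bar> \<le> 1" "\<bar>emp_moment n S j k\<bar> \<le> 1"
    using abs_emp_moment_le_1[OF _ _ S] pm1 by auto
  show "1 \<le> real n * \<bar>emp_moment n S j k\<bar>"
    using emp_moment_nonzero_ge[OF pm1(2,3) S estimate(3)] .
  show "\<bar>\<alpha>\<bar> = sqrt (\<bar>emp_moment n S i j\<bar> * \<bar>emp_moment n S i k\<bar> / \<bar>emp_moment n S j k\<bar>)"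
    using estimate(1) by (simp add: triplet_abs_def)
qed (rule estimate(2))

lemma expected_triplet_sq_error_le:
  fixes a\<^sub>i a\<^sub>j a\<^sub>k amin :: real and \<alpha> :: "(nat \<Rightarrow> nat \<Rightarrow> real) \<Rightarrow> real"
  assumes pm1: "observed_pm1 D i" "observed_pm1 D j" "observed_pm1 D k"
    and factor: "moment D i j = a\<^sub>i * a\<^sub>j" "moment D i k = a\<^sub>i * a\<^sub>k" "moment D j k = a\<^sub>j * a\<^sub>k"
    and acc: "0 < amin" "amin \<le> \<bar>a\<^sub>i\<bar>" "\<bar>a\<^sub>i\<bar> \<le> 1" "amin \<le> \<bar>a\<^sub>j\<bar>" "\<bar>a\<^sub>j\<bar> \<le> 1"
      "amin \<le> \<bar>a\<^sub>k\<bar>" "\<bar>a\<^sub>k\<bar> \<le> 1"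
    and estimate: "\<And>S. S \<in> set_pmf (samples n D) \<Longrightarrow>
      \<bar>\<alpha> S\<bar> = triplet_abs n S i j k \<and> sgn (\<alpha> S) = sgn a\<^sub>i \<and> emp_moment n S j k \<noteq> 0"
  shows "integrable (measure_pmf (samples n D)) (\<lambda>S. (\<alpha> S - a\<^sub>i)\<^sup>2)"
    and "measure_pmf.expectation (samples n D) (\<lambda>S. (\<alpha> S - a\<^sub>i)\<^sup>2) \<le> 3216 / (real n * amin ^ 8)"
proof -
  let ?P = "samples n D"
  define dev where "dev x y S = emp_moment n S x y - moment D x y" for x y S
  define R where "R S = 12 * ((dev i j S)\<^sup>2 + (dev i k S)\<^sup>2 + (dev j k S)\<^sup>2) / amin ^ 6
    + 64 * real n * (dev j k S) ^ 4 / amin ^ 8" for S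
  obtain S\<^sub>0 where "S\<^sub>0 \<in> set_pmf ?P" by (meson ex_in_conv set_pmf_not_empty)
  then have n: "1 \<le> n"
    using estimate by (cases n) (auto simp: emp_moment_def)
  have dev_integrable: "integrable (measure_pmf ?P) (\<lambda>S. dev x y S ^ p)"
    if "x \<in> {i, j, k}" "y \<in> {i, j, k}" for x y p
  proof (rule integrable_measure_pmf_bounded)
    fix S assume S: "S \<in> set_pmf ?P"
    have "observed_pm1 D x" "observed_pm1 D y" using pm1 that by auto
    then have "\<bar>dev x y S\<bar> \<le> 2"
      using abs_emp_moment_le_1[OF _ _ S] abs_moment_le_1 unfolding dev_def by fastforce
    then show "\<bar>dev x y S ^ p\<bar> \<le> 2 ^ p" unfolding power_abs by (intro power_mono) auto
  qed
  have R_integrable: "integrable (measure_pmf ?P) R"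
    unfolding R_def
    by (intro Bochner_Integration.integrable_add integrable_divide_zero integrable_mult_right
        dev_integrable) auto
  have error_le: "(\<alpha> S - a\<^sub>i)\<^sup>2 \<le> R S" if "S \<in> set_pmf ?P" for S
    unfolding R_def dev_def using estimate[OF that]
    by (intro sample_triplet_sq_error_le[OF pm1 factor acc that]) auto
  show integrable: "integrable (measure_pmf ?P) (\<lambda>S. (\<alpha> S - a\<^sub>i)\<^sup>2)"
    using error_le by (intro Bochner_Integration.integrable_bound[OF R_integrable])
      (auto simp: AE_measure_pmf_iff intro: order_trans[OF _ abs_ge_self])
  have "measure_pmf.expectation ?P (\<lambda>S. (\<alpha> S - a\<^sub>i)\<^sup>2) \<le> measure_pmf.expectation ?P R"
    using error_le by (intro integral_mono_AE integrable R_integrable) (auto simp: AE_measure_pmf_iff)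
  also have "\<dots> = 12 * (measure_pmf.expectation ?P (\<lambda>S. (dev i j S)\<^sup>2)
        + measure_pmf.expectation ?P (\<lambda>S. (dev i k S)\<^sup>2)
        + measure_pmf.expectation ?P (\<lambda>S. (dev j k S)\<^sup>2)) / amin ^ 6
      + 64 * real n * measure_pmf.expectation ?P (\<lambda>S. (dev j k S) ^ 4) / amin ^ 8"
    unfolding R_def by (simp add: dev_integrable)
  also have "\<dots> \<le> 12 * (4 / real n + 4 / real n + 4 / real n) / amin ^ 6
      + 64 * real n * (48 / (real n)\<^sup>2) / amin ^ 8"
    unfolding dev_def using emp_moment_deviation_moments[OF _ _ n] pm1 acc(1)
    by (intro add_mono divide_right_mono mult_left_mono) auto
  also have "\<dots> = 144 / (real n * amin ^ 6) + 3072 / (real n * amin ^ 8)"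
    using n by (simp add: field_simps power2_eq_square)
  also have "\<dots> \<le> 144 / (real n * amin ^ 8) + 3072 / (real n * amin ^ 8)"
    using acc n by (intro add_mono divide_left_mono mult_left_mono power_decreasing) auto
  finally show "measure_pmf.expectation ?P (\<lambda>S. (\<alpha> S - a\<^sub>i)\<^sup>2) \<le> 3216 / (real n * amin ^ 8)"
    by simp
qed

lemma expected_triplet_error_le:
  fixes \<alpha> :: "(nat \<Rightarrow> nat \<Rightarrow> real) \<Rightarrow> nat \<Rightarrow> real" and a :: "nat \<Rightarrow> real" and j k :: "nat \<Rightarrow> nat"
  assumes amin: "0 < amin"
    and pm1: "\<And>i. i < m \<Longrightarrow> observed_pm1 D i"
    and acc: "\<And>i. i < m \<Longrightarrow> amin \<le> \<bar>a i\<bar> \<and> \<bar>a i\<bar> \<le> 1"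
    and triplet: "\<And>i. i < m \<Longrightarrow> j i < m \<and> k i < m \<and> moment D i (j i) = a i * a (j i) \<and>
      moment D i (k i) = a i * a (k i) \<and> moment D (j i) (k i) = a (j i) * a (k i)"
    and estimate: "\<And>S i. S \<in> set_pmf (samples n D) \<Longrightarrow> i < m \<Longrightarrow>
      \<bar>\<alpha> S i\<bar> = triplet_abs n S i (j i) (k i) \<and> sgn (\<alpha> S i) = sgn (a i) \<and>
      emp_moment n S (j i) (k i) \<noteq> 0"
  shows "(\<integral>\<^sup>+S. ennreal (sqrt (\<Sum>i<m. (\<alpha> S i - a i)\<^sup>2)) \<partial>measure_pmf (samples n D))
    \<le> ennreal (sqrt (real m * (3216 / (real n * amin ^ 8))))"
proof -
  let ?P = "samples n D"
  have coordinate: "integrable (measure_pmf ?P) (\<lambda>S. (\<alpha> S i - a i)\<^sup>2) \<and>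
      measure_pmf.expectation ?P (\<lambda>S. (\<alpha> S i - a i)\<^sup>2) \<le> 3216 / (real n * amin ^ 8)"
    if i: "i < m" for i
    using expected_triplet_sq_error_le[of D i "j i" "k i" "a i" "a (j i)" "a (k i)" amin n "\<lambda>S. \<alpha> S i"]
      pm1 acc triplet[OF i] estimate i amin by auto
  have "(\<integral>\<^sup>+S. ennreal (sqrt (\<Sum>i<m. (\<alpha> S i - a i)\<^sup>2)) \<partial>measure_pmf ?P)
      \<le> ennreal (sqrt (measure_pmf.expectation ?P (\<lambda>S. \<Sum>i<m. (\<alpha> S i - a i)\<^sup>2)))"
    using coordinate by (intro measure_pmf.nn_integral_sqrt_le_sqrt_expectation AE_I2 sum_nonneg) auto
  also have "measure_pmf.expectation ?P (\<lambda>S. \<Sum>i<m. (\<alpha> S i - a i)\<^sup>2)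
      = (\<Sum>i<m. measure_pmf.expectation ?P (\<lambda>S. (\<alpha> S i - a i)\<^sup>2))"
    using coordinate by (intro Bochner_Integration.integral_sum) auto
  also have "\<dots> \<le> real m * (3216 / (real n * amin ^ 8))"
    using coordinate sum_mono[of "{..<m}" _ "\<lambda>_. 3216 / (real n * amin ^ 8)"] by auto
  finally show ?thesis by (simp add: ennreal_leI order_trans)
qed

lemma sqrt_le_inverse_power:
  fixes amin x :: real
  assumes "0 < amin" "amin \<le> 1" "0 \<le> x"
  shows "sqrt (x * (3216 / amin ^ 8)) \<le> 57 * (1 / amin ^ 5) * sqrt x"
proof -
  have "sqrt (amin ^ 8) = amin ^ 4"
    using assms by (intro real_sqrt_unique) (auto simp flip: power_mult)
  then have "sqrt (x * (3216 / amin ^ 8)) = sqrt 3216 * sqrt x / amin ^ 4"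
    by (simp add: real_sqrt_mult real_sqrt_divide)
  also have "\<dots> \<le> 57 * sqrt x / amin ^ 4"
    using assms by (intro divide_right_mono mult_right_mono real_le_lsqrt) auto
  also have "\<dots> \<le> 57 * sqrt x / amin ^ 5"
    using assms by (intro divide_left_mono power_decreasing) auto
  finally show ?thesis by simp
qed

theorem lemma5:
  shows "\<exists>C::real. \<forall>(m::nat) (n::nat)
      (D :: ((nat \<Rightarrow> real) \<times> (nat \<Rightarrow> real)) pmf) (hid :: nat \<Rightarrow> nat)
      (T :: nat \<Rightarrow> nat \<times> nat) (ahat :: (nat \<Rightarrow> nat \<Rightarrow> real) \<Rightarrow> nat \<Rightarrow> real) (amin :: real).
      ((\<forall>(v, y) \<in> set_pmf D. \<forall>i<m. v i \<in> {-1, 1} \<and> y (hid i) \<in> {-1, 1}) \<and>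
       (\<forall>i<m. fst (T i) < m \<and> snd (T i) < m \<and> fst (T i) \<noteq> i \<and> snd (T i) \<noteq> i \<and>
              fst (T i) \<noteq> snd (T i) \<and>
              hid (fst (T i)) = hid i \<and> hid (snd (T i)) = hid i \<and>
              moment D i (fst (T i)) = accuracy D hid i * accuracy D hid (fst (T i)) \<and>
              moment D i (snd (T i)) = accuracy D hid i * accuracy D hid (snd (T i)) \<and>
              moment D (fst (T i)) (snd (T i)) =
                accuracy D hid (fst (T i)) * accuracy D hid (snd (T i))) \<and>
       (\<forall>S \<in> set_pmf (samples n D). \<forall>i<m.
              \<bar>ahat S i\<bar> = triplet_abs n S i (fst (T i)) (snd (T i)) \<and>
              sgn (ahat S i) = sgn (accuracy D hid i) \<and>
              amin \<le> \<bar>ahat S i\<bar>) \<and>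
       (\<forall>S \<in> set_pmf (samples n D). \<forall>i<m. \<forall>j<m. emp_moment n S i j \<noteq> 0) \<and>
       (\<forall>i<m. amin \<le> \<bar>accuracy D hid i\<bar>) \<and>
       0 < amin)
      \<longrightarrow>
      (\<integral>\<^sup>+ S. ennreal (sqrt (\<Sum>i<m. (ahat S i - accuracy D hid i)\<^sup>2)) \<partial>measure_pmf (samples n D))
        \<le> ennreal (C * (1 / amin ^ 5) * sqrt (real m / real n))"
  apply (intro exI[of _ 57] allI impI, elim conjE)
  subgoal premises prems for m n D hid T ahat amin
  proof (cases "m = 0")
    case True
    then show ?thesis by simp
  next
    case False
    have acc: "amin \<le> \<bar>accuracy D hid i\<bar> \<and> \<bar>accuracy D hid i\<bar> \<le> 1" if "i < m" for i
      using prems(5) abs_accuracy_le_1[of D i hid] prems(1) that by fastforce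
    have "(\<integral>\<^sup>+S. ennreal (sqrt (\<Sum>i<m. (ahat S i - accuracy D hid i)\<^sup>2)) \<partial>measure_pmf (samples n D))
        \<le> ennreal (sqrt (real m * (3216 / (real n * amin ^ 8))))"
      by (rule expected_triplet_error_le[where j="\<lambda>i. fst (T i)" and k="\<lambda>i. snd (T i)"])
         (use prems acc in \<open>auto simp: observed_pm1_def\<close>)
    also have "\<dots> \<le> ennreal (57 * (1 / amin ^ 5) * sqrt (real m / real n))"
      using sqrt_le_inverse_power[of amin "real m / real n"] acc[of 0] False prems(6)
      by (intro ennreal_leI) (auto simp: field_simps)
    finally show ?thesis .
  qed
  done

end
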